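(* For positive integers $r$ and integers $0\le d\le n$, let $\mathrm{Sch}_{n,d}^r$ be the set of lattice paths from $(0,n)$ to $(rn,0)$ using steps $(0,-1)$ (down), $(1,0)$ (right) and $(r,-1)$ (diagonal), never passing strictly above the line through $(0,n)$ and $(rn,0)$, and having exactly $n-d$ diagonal steps. For $\alpha\in\mathrm{Sch}_{n,d}^r$ and $1\le i\le n$, let $a_i(\alpha)$ be the $x$-coordinate of the starting point of the unique down or diagonal step of $\alpha$ going from height $n-i+1$ to height $n-i$, and set $\mathrm{aire}(\alpha)=\sum_{i=1}^n\big(r(i-1)-a_i(\alpha)\big)$. Then there is no family of functions $\mathrm{dinv}=\mathrm{dinv}_{n,d}^r:\mathrm{Sch}_{n,d}^r\to\mathbb{Z}_{\ge 0}$ (one for each $r\ge1$ and each $0\le d\le n$) such that for all $r,n,d$ both of the following hold: (i) the polynomial $S_{n,d}^r(q,t)=\sum_{\alpha\in\mathrm{Sch}_{n,d}^r}q^{\mathrm{aire}(\alpha)}t^{\mathrm{dinv}(\alpha)}$ is symmetric, i.e. $S_{n,d}^r(q,t)=S_{n,d}^r(t,q)$; (ii) there is an integer $w$ (possibly depending on $n,d,r$) with $$q^{w}\sum_{\alpha\in\mathrm{Sch}_{n,d}^r}q^{\mathrm{aire}(\alpha)-\mathrm{dinv}(\alpha)}=\frac{1}{[dr+1]_q}\binom{n}{d}_q\binom{dr+n}{n}_q .$$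
   Context: $q$-analogues: $[m]_q=1+q+\cdots+q^{m-1}$, $[m]!_q=[1]_q[2]_q\cdots[m]_q$, $\binom{m}{k}_q=\frac{[m]!_q}{[k]!_q[m-k]!_q}$. The quantity $r(i-1)-a_i(\alpha)$ is the area of row $i$ of $\alpha$ (the number of unit cells in row $i$ between the path and the line through $(0,n)$ and $(rn,0)$). *)

theory Defs
  imports Complex_Main
begin

datatype step = Down | Right | Diag

fun step_dx :: "nat \<Rightarrow> step \<Rightarrow> int" where
  "step_dx r Down = 0" | "step_dx r Right = 1" | "step_dx r Diag = int r"

fun step_dy :: "step \<Rightarrow> int" where
  "step_dy Down = -1" | "step_dy Right = 0" | "step_dy Diag = -1"

definition vx :: "nat \<Rightarrow> step list \<Rightarrow> nat \<Rightarrow> int" where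
  "vx r p k = (\<Sum>s\<leftarrow>take k p. step_dx r s)"

definition vy :: "nat \<Rightarrow> step list \<Rightarrow> nat \<Rightarrow> int" where
  "vy n p k = int n + (\<Sum>s\<leftarrow>take k p. step_dy s)"

definition Sch :: "nat \<Rightarrow> nat \<Rightarrow> nat \<Rightarrow> step list set" where
  "Sch r n d = {p. vx r p (length p) = int (r * n) \<and> vy n p (length p) = 0
      \<and> (\<forall>k\<le>length p. vx r p k + int r * vy n p k \<le> int (r * n))
      \<and> length (filter (\<lambda>s. s = Diag) p) = n - d}"

fun starts :: "nat \<Rightarrow> nat \<Rightarrow> step list \<Rightarrow> nat list" where
  "starts r x [] = []"
| "starts r x (Right # p) = starts r (x + 1) p"
| "starts r x (Down # p) = x # starts r x p"
| "starts r x (Diag # p) = x # starts r (x + r) p"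

definition a_coord :: "nat \<Rightarrow> step list \<Rightarrow> nat \<Rightarrow> nat" where
  "a_coord r p i = starts r 0 p ! (i - 1)"

definition aire :: "nat \<Rightarrow> nat \<Rightarrow> step list \<Rightarrow> int" where
  "aire r n p = (\<Sum>i=1..n. int (r * (i - 1)) - int (a_coord r p i))"

definition qint :: "nat \<Rightarrow> real \<Rightarrow> real" where
  "qint m q = (\<Sum>k<m. q ^ k)"

definition qfact :: "nat \<Rightarrow> real \<Rightarrow> real" where
  "qfact m q = (\<Prod>k=1..m. qint k q)"

definition qbinom :: "nat \<Rightarrow> nat \<Rightarrow> real \<Rightarrow> real" where
  "qbinom m k q = qfact m q / (qfact k q * qfact (m - k) q)"

definition Spoly :: "(step list \<Rightarrow> nat) \<Rightarrow> nat \<Rightarrow> nat \<Rightarrow> nat \<Rightarrow> real \<Rightarrow> real \<Rightarrow> real" where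
  "Spoly dinv r n d q t = (\<Sum>\<alpha>\<in>Sch r n d. q powi aire r n \<alpha> * t ^ dinv \<alpha>)"

end

theory Submission
  imports Defs
begin

text \<open>Specialising \<open>t = 1\<close> and differentiating at \<open>q = 1\<close>, symmetry of \<open>S\<^sup>r\<^sub>n\<^sub>,\<^sub>d(q,t)\<close>
  forces the total area to equal the total dinv, so \<open>h(q) = \<Sum>\<^sub>\<alpha> q\<^bsup>aire \<alpha> - dinv \<alpha>\<^esup>\<close>
  has \<open>h'(1) = 0\<close>. Differentiating \<open>q\<^sup>w h(q) = R(q)\<close> at \<open>q = 1\<close> then gives
  \<open>R'(1) = w R(1)\<close>. For \<open>r = 2\<close>, \<open>n = 2\<close>, \<open>d = 1\<close> the right-hand side is
  \<open>R(q) = (1 + q)(1 + q\<^sup>2)\<close> with \<open>R(1) = 4\<close> and \<open>R'(1) = 6\<close>, and \<open>6 = 4w\<close> has no integer solution.\<close>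

lemma length_le_sum_step_dx_minus_dy: "int (length p) \<le> (\<Sum>s\<leftarrow>p. step_dx r s - step_dy s)"
proof (induction p)
  case (Cons s p)
  then show ?case by (cases s) auto
qed simp

lemma finite_Sch: "finite (Sch r n d)"
proof (rule finite_subset)
  show "Sch r n d \<subseteq> {p. set p \<subseteq> UNIV \<and> length p \<le> r * n + n}"
  proof (intro subsetI CollectI conjI subset_UNIV UNIV_I)
    fix p assume "p \<in> Sch r n d"
    then have "vx r p (length p) = int (r * n)" "vy n p (length p) = 0"
      by (auto simp: Sch_def)
    then have "(\<Sum>s\<leftarrow>p. step_dx r s - step_dy s) = int (r * n + n)"
      by (simp add: sum_list_subtractf vx_def vy_def)
    then show "length p \<le> r * n + n"
      using length_le_sum_step_dx_minus_dy[of p r] by linarith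
  qed
  have "(UNIV :: step set) = {Down, Right, Diag}"
    using step.exhaust by auto
  then have "finite (UNIV :: step set)"
    by (metis finite.emptyI finite.insertI)
  then show "finite {p. set p \<subseteq> (UNIV :: step set) \<and> length p \<le> r * n + n}"
    by (rule finite_lists_length_le)
qed

lemma has_field_derivative_sum_power_int_at_1:
  assumes "finite A"
  shows "((\<lambda>q::real. \<Sum>\<alpha>\<in>A. q powi e \<alpha>) has_field_derivative (\<Sum>\<alpha>\<in>A. of_int (e \<alpha>))) (at 1)"
proof -
  have "((\<lambda>q::real. \<Sum>\<alpha>\<in>A. q powi e \<alpha>) has_field_derivative
      (\<Sum>\<alpha>\<in>A. of_int (e \<alpha>) * 1 powi (e \<alpha> - 1) * 1)) (at 1)"
    using assms by (intro DERIV_sum DERIV_power_int DERIV_ident) simp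
  then show ?thesis
    by simp
qed

lemma sum_eq_if_symmetric_generating_function:
  assumes "finite A"
    and symmetric: "\<And>q t::real. (\<Sum>\<alpha>\<in>A. q powi a \<alpha> * t ^ b \<alpha>) = (\<Sum>\<alpha>\<in>A. t powi a \<alpha> * q ^ b \<alpha>)"
  shows "(\<Sum>\<alpha>\<in>A. a \<alpha>) = (\<Sum>\<alpha>\<in>A. int (b \<alpha>))"
proof -
  have "(\<lambda>q::real. \<Sum>\<alpha>\<in>A. q powi a \<alpha>) = (\<lambda>q. \<Sum>\<alpha>\<in>A. q powi int (b \<alpha>))"
    using symmetric[of _ 1] by (simp add: power_int_of_nat)
  then have "(\<Sum>\<alpha>\<in>A. of_int (a \<alpha>) :: real) = (\<Sum>\<alpha>\<in>A. of_int (int (b \<alpha>)))"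
    using has_field_derivative_sum_power_int_at_1[OF \<open>finite A\<close>, of a]
      has_field_derivative_sum_power_int_at_1[OF \<open>finite A\<close>, of "\<lambda>\<alpha>. int (b \<alpha>)"]
    by (metis DERIV_unique)
  then show ?thesis
    by (metis of_int_eq_iff of_int_sum)
qed

lemma deriv_eq_power_int_mult_balanced_sum:
  assumes "finite A"
    and balanced: "(\<Sum>\<alpha>\<in>A. e \<alpha>) = 0"
    and R_eq: "\<And>q::real. q > 0 \<Longrightarrow> q powi w * (\<Sum>\<alpha>\<in>A. q powi e \<alpha>) = R q"
    and R_deriv: "(R has_field_derivative R') (at 1)"
  shows "R' = of_int w * R 1"
proof -
  define h where "h = (\<lambda>q::real. \<Sum>\<alpha>\<in>A. q powi e \<alpha>)"
  have "(\<Sum>\<alpha>\<in>A. of_int (e \<alpha>) :: real) = 0"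
    using balanced by (metis of_int_0 of_int_sum)
  then have h_deriv: "(h has_field_derivative 0) (at 1)"
    using has_field_derivative_sum_power_int_at_1[OF \<open>finite A\<close>, of e] by (simp add: h_def)
  have "((\<lambda>q. q powi w * h q) has_field_derivative
      of_int w * 1 powi (w - 1) * 1 * h 1 + 0 * 1 powi w) (at 1)"
    by (rule DERIV_mult[OF DERIV_power_int[OF DERIV_ident] h_deriv]) simp
  moreover have "((\<lambda>q. q powi w * h q) has_field_derivative R') (at 1)"
    by (rule has_field_derivative_transform_within_open[OF R_deriv, of "{0<..}"])
      (auto simp: R_eq h_def)
  moreover have "h 1 = R 1"
    using R_eq[of 1] by (simp add: h_def)
  ultimately show ?thesis
    by (simp add: DERIV_unique)
qed

lemma qbinom_right_hand_side_2_2_1: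
  assumes "(q::real) > 0"
  shows "1 / qint 3 q * qbinom 2 1 q * qbinom 4 2 q = (1 + q) * (1 + q\<^sup>2)"
proof -
  have "qint 3 q = 1 + q + q\<^sup>2"
    by (simp add: qint_def numeral_eq_Suc lessThan_Suc power2_eq_square)
  moreover have "qbinom 2 1 q = 1 + q"
    by (simp add: qbinom_def qfact_def qint_def numeral_eq_Suc lessThan_Suc)
  moreover have "qbinom 4 2 q = (1 + q\<^sup>2) * (1 + q + q\<^sup>2)"
  proof -
    have "qfact 4 q = (1 + q) * (1 + q + q\<^sup>2) * ((1 + q) * (1 + q\<^sup>2))"
      by (simp add: qfact_def qint_def numeral_eq_Suc lessThan_Suc atLeastAtMostSuc_conv
          power2_eq_square algebra_simps)
    moreover have "qfact 2 q = 1 + q"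
      by (simp add: qfact_def qint_def numeral_eq_Suc lessThan_Suc)
    ultimately show ?thesis
      using assms by (simp add: qbinom_def)
  qed
  moreover have "1 + q + q\<^sup>2 \<noteq> 0"
    using assms by (smt (verit) zero_le_power2)
  ultimately show ?thesis
    by simp
qed

lemma no_statistic_for_Sch_2_2_1:
  assumes symmetric: "\<And>q t. Spoly D 2 2 1 q t = Spoly D 2 2 1 t q"
    and R_eq: "\<And>q::real. q > 0 \<Longrightarrow>
      q powi w * (\<Sum>\<alpha>\<in>Sch 2 2 1. q powi (aire 2 2 \<alpha> - int (D \<alpha>)))
        = 1 / qint 3 q * qbinom 2 1 q * qbinom 4 2 q"
  shows False
proof -
  have "(\<Sum>\<alpha>\<in>Sch 2 2 1. aire 2 2 \<alpha> - int (D \<alpha>)) = 0"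
    using sum_eq_if_symmetric_generating_function[OF finite_Sch symmetric[unfolded Spoly_def]]
    by (simp add: sum_subtractf)
  moreover have "\<And>q::real. q > 0 \<Longrightarrow>
      q powi w * (\<Sum>\<alpha>\<in>Sch 2 2 1. q powi (aire 2 2 \<alpha> - int (D \<alpha>))) = (1 + q) * (1 + q\<^sup>2)"
    using R_eq qbinom_right_hand_side_2_2_1 by simp
  moreover have "((\<lambda>q::real. (1 + q) * (1 + q\<^sup>2)) has_field_derivative 6) (at 1)"
    by (auto intro!: derivative_eq_intros)
  ultimately have "6 = of_int w * ((1 + 1) * (1 + 1\<^sup>2) :: real)"
    by (rule deriv_eq_power_int_mult_balanced_sum[OF finite_Sch])
  then have "4 * w = 6"
    by simp
  then show False
    by presburger
qed

theorem mainTheorem1: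
  shows "\<not> (\<exists>dinv :: nat \<Rightarrow> nat \<Rightarrow> nat \<Rightarrow> step list \<Rightarrow> nat.
            \<forall>r n d. r \<ge> 1 \<and> d \<le> n \<longrightarrow>
              (\<forall>q t. Spoly (dinv r n d) r n d q t = Spoly (dinv r n d) r n d t q)
            \<and> (\<exists>w::int. \<forall>q::real. q > 0 \<longrightarrow>
                 q powi w * (\<Sum>\<alpha>\<in>Sch r n d. q powi (aire r n \<alpha> - int (dinv r n d \<alpha>)))
                 = (1 / qint (d * r + 1) q) * qbinom n d q * qbinom (d * r + n) n q))"
proof (intro notI, elim exE)
  fix dinv :: "nat \<Rightarrow> nat \<Rightarrow> nat \<Rightarrow> step list \<Rightarrow> nat"
  assume "\<forall>r n d. r \<ge> 1 \<and> d \<le> n \<longrightarrow>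
              (\<forall>q t. Spoly (dinv r n d) r n d q t = Spoly (dinv r n d) r n d t q)
            \<and> (\<exists>w::int. \<forall>q::real. q > 0 \<longrightarrow>
                 q powi w * (\<Sum>\<alpha>\<in>Sch r n d. q powi (aire r n \<alpha> - int (dinv r n d \<alpha>)))
                 = (1 / qint (d * r + 1) q) * qbinom n d q * qbinom (d * r + n) n q)"
  from this[rule_format, of 2 1 2] show False
    using no_statistic_for_Sch_2_2_1[of "dinv 2 2 1"] by auto
qed

end
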